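(* Let $G$ be a group acting on a manifold $X$ by homeomorphisms and let $f\colon X\to X$ be a $G$-equivariant map whose fixed point classes are compact. Then for every fixed point $x$ of $f$ and every $g\in G$, the fixed point indices of the fixed point classes of $x$ and $gx$ agree: $i(f,[x])=i(f,[gx])$.
   Context: Two fixed points $x,y$ of $f$ lie in the same fixed point class if there is a path $\alpha$ from $x$ to $y$ with $\alpha\simeq f(\alpha)$ rel endpoints. For a class $F$, $i(f,[x])$ is the fixed point index of $f$ on a neighbourhood $U$ of $F=[x]$ containing no other fixed points: in a chart $\psi$, with $V\subset U$ a ball neighbourhood of $F$ with $f(V)\subseteq U$, it is the integer $i$ with $(\mathrm{id}-\psi f\psi^{-1})_*[S^n]_F=i\cdot[S^n]$ under $H_n(\psi V,\psi V-\psi F)\to H_n(\mathbb{R}^n,\mathbb{R}^n-\{0\})\cong\mathbb{Z}$. *)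

theory Defs
  imports "HOL-Analysis.Analysis" "HOL-Homology.Homology" "HOL-Algebra.Group_Action"
begin

definition is_manifold :: "'b::euclidean_space itself \<Rightarrow> 'a topology \<Rightarrow> bool" where
  "is_manifold TYPE('b) X \<longleftrightarrow>
     Hausdorff_space X \<and> second_countable X \<and>
     (\<forall>x\<in>topspace X. \<exists>W (\<psi>::'a \<Rightarrow> 'b).
         openin X W \<and> x \<in> W \<and> open (\<psi> ` W) \<and>
         homeomorphic_map (subtopology X W) (top_of_set (\<psi> ` W)) \<psi>)"

definition fp_class :: "'a topology \<Rightarrow> ('a \<Rightarrow> 'a) \<Rightarrow> 'a \<Rightarrow> 'a set" where
  "fp_class X f x =
     {y \<in> topspace X. f y = y \<and>
        (\<exists>\<alpha>. pathin X \<alpha> \<and> \<alpha> 0 = x \<and> \<alpha> 1 = y \<and>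
             homotopic_with (\<lambda>h. h 0 = x \<and> h 1 = y) (top_of_set {0..1}) X \<alpha> (f \<circ> \<alpha>))}"

text \<open>The local class of F is the image of a class c of
  H_n(psi V, psi V - B), B a closed ball around psi F inside psi V; the reference
  class [S^n] is the image of c in H_n(R^n, R^n - 0) via translation of the centre
  of B to 0. The condition is required for all c (H_n(psi V, psi V - B) is
  infinite cyclic, so this is equivalent to requiring it for a generator).\<close>
definition is_fp_index :: "'b::euclidean_space itself \<Rightarrow> 'a topology \<Rightarrow> ('a \<Rightarrow> 'a) \<Rightarrow> 'a set \<Rightarrow> int \<Rightarrow> bool" where
  "is_fp_index TYPE('b) X f F i \<longleftrightarrow>
     (\<exists>U W (\<psi>::'a \<Rightarrow> 'b) V (a::'b) r s.
        openin X U \<and> F \<subseteq> U \<and> {y \<in> U. f y = y} = F \<and>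
        openin X W \<and> U \<subseteq> W \<and> open (\<psi> ` W) \<and>
        homeomorphic_map (subtopology X W) (top_of_set (\<psi> ` W)) \<psi> \<and>
        F \<subseteq> V \<and> V \<subseteq> U \<and> f ` V \<subseteq> U \<and> \<psi> ` V = ball a r \<and>
        0 \<le> s \<and> s < r \<and> \<psi> ` F \<subseteq> cball a s \<and>
        (let n = int DIM('b); PV = ball a r; B = cball a s;
             g = (\<lambda>z. z - \<psi> (f (inv_into W \<psi> z)));
             H0 = relative_homology_group n (euclidean::'b topology) (- {0})
         in \<forall>c \<in> carrier (relative_homology_group n (top_of_set PV) (PV - B)).
              hom_induced n (top_of_set PV) (PV - \<psi> ` F) euclidean (- {0}) g
                (hom_induced n (top_of_set PV) (PV - B) (top_of_set PV) (PV - \<psi> ` F) id c)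
              = (hom_induced n (top_of_set PV) (PV - B) euclidean (- {0}) (\<lambda>z. z - a) c)
                  [^]\<^bsub>H0\<^esub> i))"

definition fp_index :: "'b::euclidean_space itself \<Rightarrow> 'a topology \<Rightarrow> ('a \<Rightarrow> 'a) \<Rightarrow> 'a set \<Rightarrow> int" where
  "fp_index TYPE('b) X f F = (THE i. is_fp_index TYPE('b) X f F i)"

end

theory Submission
  imports Defs
begin

text \<open>A homeomorphism h of X commuting with f carries the data witnessing an
  index of f on F (neighbourhood, chart, ball) to data for h ` F: the chart
  \<psi> is replaced by \<psi> \<circ> h\<inverse>, which has the same image and, because h commutes
  with f, the same displacement map z - \<psi> (f (\<psi>\<inverse> z)). So the local homology
  computation is literally unchanged and the index is invariant. Since h also
  maps the fixed point class of x onto that of h x, applying this to the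
  homeomorphisms of the action gives the theorem.\<close>

lemma homeomorphic_maps_image_inverse:
  assumes "homeomorphic_maps X Y h k" "S \<subseteq> topspace X"
  shows "k ` h ` S = S"
  using assms unfolding homeomorphic_maps_def by (force simp: image_iff)

lemma homeomorphic_maps_commute_inverse:
  assumes hk: "homeomorphic_maps X X h k"
    and f: "f ` topspace X \<subseteq> topspace X"
    and comm: "\<And>y. y \<in> topspace X \<Longrightarrow> f (h y) = h (f y)"
    and y: "y \<in> topspace X"
  shows "f (k y) = k (f y)"
proof -
  have ky: "k y \<in> topspace X"
    using hk y unfolding homeomorphic_maps_def by (auto dest: continuous_map_image_subset_topspace)
  then have "f (k y) = k (h (f (k y)))"
    using hk f unfolding homeomorphic_maps_def by auto
  also have "\<dots> = k (f (h (k y)))" using comm ky by simp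
  also have "\<dots> = k (f y)" using hk y unfolding homeomorphic_maps_def by simp
  finally show ?thesis .
qed

lemma homeomorphic_map_compose_inverse_subtopology:
  assumes hk: "homeomorphic_maps X Y h k" and W: "W \<subseteq> topspace X"
    and \<psi>: "homeomorphic_map (subtopology X W) T \<psi>"
  shows "homeomorphic_map (subtopology Y (h ` W)) T (\<psi> \<circ> k)"
proof -
  have "h ` W \<subseteq> topspace Y"
    using hk W unfolding homeomorphic_maps_def by (auto dest: continuous_map_image_subset_topspace)
  then have "k ` (topspace Y \<inter> h ` W) = topspace X \<inter> W"
    using homeomorphic_maps_image_inverse[OF hk W] W by (simp add: Int_absorb1)
  then have "homeomorphic_map (subtopology Y (h ` W)) (subtopology X W) k"
    using hk by (intro homeomorphic_map_subtopologies) (simp_all add: homeomorphic_maps_map)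
  then show ?thesis using \<psi> by (rule homeomorphic_map_compose)
qed

lemma inv_into_compose_inverse_image:
  assumes hk: "homeomorphic_maps X Y h k" and W: "W \<subseteq> topspace X"
    and \<psi>: "inj_on \<psi> W" and z: "z \<in> \<psi> ` W"
  shows "inv_into (h ` W) (\<psi> \<circ> k) z = h (inv_into W \<psi> z)"
proof (rule inv_into_f_eq)
  have kh: "\<And>v. v \<in> W \<Longrightarrow> k (h v) = v"
    using hk W unfolding homeomorphic_maps_def by auto
  show "inj_on (\<psi> \<circ> k) (h ` W)"
    using \<psi> kh unfolding inj_on_def by force
  show "h (inv_into W \<psi> z) \<in> h ` W"
    using z by (intro imageI inv_into_into)
  show "(\<psi> \<circ> k) (h (inv_into W \<psi> z)) = z"
    using z kh inv_into_into[OF z] by (simp add: f_inv_into_f)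
qed

lemma displacement_compose_inverse:
  assumes hk: "homeomorphic_maps X X h k"
    and f: "f ` topspace X \<subseteq> topspace X"
    and comm: "\<And>y. y \<in> topspace X \<Longrightarrow> f (h y) = h (f y)"
    and W: "W \<subseteq> topspace X" and \<psi>: "inj_on \<psi> W" and z: "z \<in> \<psi> ` W"
  shows "(\<psi> \<circ> k) (f (inv_into (h ` W) (\<psi> \<circ> k) z)) = \<psi> (f (inv_into W \<psi> z))"
proof -
  have "inv_into W \<psi> z \<in> topspace X" using inv_into_into[OF z] W by blast
  moreover have "inv_into (h ` W) (\<psi> \<circ> k) z = h (inv_into W \<psi> z)"
    using hk W \<psi> z by (rule inv_into_compose_inverse_image)
  ultimately show ?thesis
    using hk f comm unfolding homeomorphic_maps_def by auto
qed

lemma fixed_points_image: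
  assumes h: "inj_on h (topspace X)" and U: "U \<subseteq> topspace X"
    and f: "f ` topspace X \<subseteq> topspace X"
    and comm: "\<And>y. y \<in> topspace X \<Longrightarrow> f (h y) = h (f y)"
  shows "{y \<in> h ` U. f y = y} = h ` {y \<in> U. f y = y}"
proof -
  have "f (h u) = h u \<longleftrightarrow> f u = u" if "u \<in> U" for u
  proof -
    have u: "u \<in> topspace X" "f u \<in> topspace X" using that U f by auto
    then have "f (h u) = h (f u)" by (simp add: comm)
    with u show ?thesis by (simp add: inj_on_eq_iff[OF h])
  qed
  then show ?thesis by auto
qed

lemma fp_class_subset_topspace: "fp_class X f x \<subseteq> topspace X"
  unfolding fp_class_def by blast

lemma fp_class_image_subset:
  assumes h: "continuous_map X X h"
    and comm: "\<And>y. y \<in> topspace X \<Longrightarrow> f (h y) = h (f y)"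
  shows "h ` fp_class X f x \<subseteq> fp_class X f (h x)"
proof
  fix z assume "z \<in> h ` fp_class X f x"
  then obtain y \<alpha> where z: "z = h y" and y: "y \<in> topspace X" "f y = y"
    and \<alpha>: "pathin X \<alpha>" "\<alpha> 0 = x" "\<alpha> 1 = y"
    and htp: "homotopic_with (\<lambda>k. k 0 = x \<and> k 1 = y) (top_of_set {0..1}) X \<alpha> (f \<circ> \<alpha>)"
    unfolding fp_class_def by blast
  have "homotopic_with (\<lambda>k. k 0 = h x \<and> k 1 = h y) (top_of_set {0..1}) X (h \<circ> \<alpha>) (h \<circ> (f \<circ> \<alpha>))"
    by (rule homotopic_with_compose_continuous_map_left[OF htp h]) auto
  moreover have "\<And>t. t \<in> {0..1} \<Longrightarrow> h (f (\<alpha> t)) = f (h (\<alpha> t))"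
    using \<alpha>(1) comm by (auto simp: pathin_def continuous_map_def Pi_iff)
  ultimately have "homotopic_with (\<lambda>k. k 0 = h x \<and> k 1 = h y) (top_of_set {0..1}) X (h \<circ> \<alpha>) (f \<circ> (h \<circ> \<alpha>))"
    by (elim homotopic_with_eq) auto
  moreover have "pathin X (h \<circ> \<alpha>)" using \<alpha>(1) h by (rule pathin_compose)
  moreover have "h y \<in> topspace X" using h y(1) by (auto simp: continuous_map_def)
  ultimately show "z \<in> fp_class X f (h x)"
    unfolding fp_class_def using z y \<alpha> comm by auto
qed

lemma fp_class_homeomorphic_image:
  assumes h: "homeomorphic_map X X h"
    and f: "f ` topspace X \<subseteq> topspace X"
    and comm: "\<And>y. y \<in> topspace X \<Longrightarrow> f (h y) = h (f y)"
    and x: "x \<in> topspace X"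
  shows "h ` fp_class X f x = fp_class X f (h x)"
proof
  obtain k where hk: "homeomorphic_maps X X h k" using h homeomorphic_map_maps by blast
  show "h ` fp_class X f x \<subseteq> fp_class X f (h x)"
    using hk comm by (intro fp_class_image_subset) (simp add: homeomorphic_maps_def)
  have "continuous_map X X k" using hk by (simp add: homeomorphic_maps_def)
  then have "k ` fp_class X f (h x) \<subseteq> fp_class X f (k (h x))"
    using homeomorphic_maps_commute_inverse[OF hk f comm] by (rule fp_class_image_subset)
  moreover have "k (h x) = x" using hk x unfolding homeomorphic_maps_def by simp
  ultimately have "k ` fp_class X f (h x) \<subseteq> fp_class X f x" by simp
  then have "h ` k ` fp_class X f (h x) \<subseteq> h ` fp_class X f x"
    by (rule image_mono)
  moreover have "h ` k ` fp_class X f (h x) = fp_class X f (h x)"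
    using hk by (metis homeomorphic_maps_sym homeomorphic_maps_image_inverse fp_class_subset_topspace)
  ultimately show "fp_class X f (h x) \<subseteq> h ` fp_class X f x"
    by simp
qed

definition has_local_index :: "('b::euclidean_space \<Rightarrow> 'b) \<Rightarrow> 'b set \<Rightarrow> 'b \<Rightarrow> real \<Rightarrow> real \<Rightarrow> int \<Rightarrow> bool"
  where "has_local_index g K a r s i \<longleftrightarrow>
    (let n = int DIM('b); PV = ball a r; B = cball a s;
         H0 = relative_homology_group n (euclidean::'b topology) (- {0})
     in \<forall>c \<in> carrier (relative_homology_group n (top_of_set PV) (PV - B)).
          hom_induced n (top_of_set PV) (PV - K) euclidean (- {0}) g
            (hom_induced n (top_of_set PV) (PV - B) (top_of_set PV) (PV - K) id c)
          = (hom_induced n (top_of_set PV) (PV - B) euclidean (- {0}) (\<lambda>z. z - a) c)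
              [^]\<^bsub>H0\<^esub> i)"

lemma is_fp_index_iff:
  "is_fp_index TYPE('b::euclidean_space) X f F i \<longleftrightarrow>
     (\<exists>U W (\<psi>::'a \<Rightarrow> 'b) V a r s.
        openin X U \<and> F \<subseteq> U \<and> {y \<in> U. f y = y} = F \<and>
        openin X W \<and> U \<subseteq> W \<and> open (\<psi> ` W) \<and>
        homeomorphic_map (subtopology X W) (top_of_set (\<psi> ` W)) \<psi> \<and>
        F \<subseteq> V \<and> V \<subseteq> U \<and> f ` V \<subseteq> U \<and> \<psi> ` V = ball a r \<and>
        0 \<le> s \<and> s < r \<and> \<psi> ` F \<subseteq> cball a s \<and>
        has_local_index (\<lambda>z. z - \<psi> (f (inv_into W \<psi> z))) (\<psi> ` F) a r s i)"
  unfolding is_fp_index_def has_local_index_def Let_def ..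

lemma has_local_index_cong:
  fixes g g' :: "'b::euclidean_space \<Rightarrow> 'b"
  assumes "\<And>z. z \<in> ball a r \<Longrightarrow> g z = g' z"
  shows "has_local_index g K a r s i \<longleftrightarrow> has_local_index g' K a r s i"
proof -
  have "hom_induced n (top_of_set (ball a r)) S euclidean (- {0}) g
        = hom_induced n (top_of_set (ball a r)) S euclidean (- {0}) g'" for n S
    using assms by (intro hom_induced_eq) simp
  then show ?thesis unfolding has_local_index_def Let_def by simp
qed

lemma is_fp_index_homeomorphic_image:
  fixes X :: "'a topology" and f h k :: "'a \<Rightarrow> 'a"
  assumes hk: "homeomorphic_maps X X h k"
    and f: "f ` topspace X \<subseteq> topspace X"
    and comm: "\<And>y. y \<in> topspace X \<Longrightarrow> f (h y) = h (f y)"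
    and index: "is_fp_index TYPE('b::euclidean_space) X f F i"
  shows "is_fp_index TYPE('b) X f (h ` F) i"
proof -
  obtain U W V a r s and \<psi> :: "'a \<Rightarrow> 'b" where
    U: "openin X U" "F \<subseteq> U" "{y \<in> U. f y = y} = F" and
    W: "openin X W" "U \<subseteq> W" "open (\<psi> ` W)"
      "homeomorphic_map (subtopology X W) (top_of_set (\<psi> ` W)) \<psi>" and
    V: "F \<subseteq> V" "V \<subseteq> U" "f ` V \<subseteq> U" "\<psi> ` V = ball a r" and
    s: "0 \<le> s" "s < r" "\<psi> ` F \<subseteq> cball a s" and
    local_index: "has_local_index (\<lambda>z. z - \<psi> (f (inv_into W \<psi> z))) (\<psi> ` F) a r s i"
    using index unfolding is_fp_index_iff by (elim exE conjE) (rule that; assumption)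
  define \<psi>' where "\<psi>' = \<psi> \<circ> k"
  have WX: "W \<subseteq> topspace X" using W(1) by (rule openin_subset)
  have FX: "F \<subseteq> topspace X" and VX: "V \<subseteq> topspace X" using U(2) V(1,2) W(2) WX by auto
  have h: "homeomorphic_map X X h" using hk by (rule homeomorphic_maps_imp_map)
  have image_chart: "\<psi>' ` h ` S = \<psi> ` S" if "S \<subseteq> topspace X" for S
    unfolding \<psi>'_def image_comp[symmetric] homeomorphic_maps_image_inverse[OF hk that] ..
  have chart: "homeomorphic_map (subtopology X (h ` W)) (top_of_set (\<psi>' ` h ` W)) \<psi>'"
    unfolding \<psi>'_def image_chart[OF WX, unfolded \<psi>'_def]
    using hk WX W(4) by (rule homeomorphic_map_compose_inverse_subtopology)
  have inj: "inj_on \<psi> W"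
    using homeomorphic_imp_injective_map[OF W(4)] WX by (simp add: Int_absorb1)
  have displacement: "\<psi>' (f (inv_into (h ` W) \<psi>' z)) = \<psi> (f (inv_into W \<psi> z))"
    if "z \<in> ball a r" for z
  proof -
    have "z \<in> \<psi> ` W" using that V(2,4) W(2) by blast
    then show ?thesis
      unfolding \<psi>'_def using displacement_compose_inverse[OF hk f comm WX inj] by blast
  qed
  have "has_local_index (\<lambda>z. z - \<psi>' (f (inv_into (h ` W) \<psi>' z))) (\<psi>' ` h ` F) a r s i"
    unfolding image_chart[OF FX] using local_index
    by (subst has_local_index_cong[where g' = "\<lambda>z. z - \<psi> (f (inv_into W \<psi> z))"])
      (simp_all add: displacement)
  moreover have "{y \<in> h ` U. f y = y} = h ` F"
    using fixed_points_image[OF homeomorphic_imp_injective_map[OF h]] U W(2) WX f comm by auto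
  moreover have "f ` h ` V \<subseteq> h ` U"
    using V(2,3) W(2) WX comm by (force simp: image_iff)
  moreover have "openin X (h ` U)" "openin X (h ` W)"
    using U(1) W(1) homeomorphic_map_openness_eq[OF h] by blast+
  moreover have "\<psi>' ` h ` V = ball a r" "\<psi>' ` h ` F \<subseteq> cball a s" "open (\<psi>' ` h ` W)"
    using V(4) s(3) W(3) image_chart[OF VX] image_chart[OF FX] image_chart[OF WX] by simp_all
  moreover have "h ` F \<subseteq> h ` U" "h ` U \<subseteq> h ` W" "h ` F \<subseteq> h ` V" "h ` V \<subseteq> h ` U"
    using U(2) W(2) V(1,2) by (simp_all add: image_mono)
  ultimately show ?thesis
    unfolding is_fp_index_iff using chart s(1,2)
    by (intro exI[of _ "h ` U"] exI[of _ "h ` W"] exI[of _ \<psi>'] exI[of _ "h ` V"]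
        exI[of _ a] exI[of _ r] exI[of _ s] conjI) assumption+
qed

lemma fp_index_homeomorphic_image:
  assumes h: "homeomorphic_map X X h"
    and f: "f ` topspace X \<subseteq> topspace X"
    and comm: "\<And>y. y \<in> topspace X \<Longrightarrow> f (h y) = h (f y)"
    and F: "F \<subseteq> topspace X"
  shows "fp_index TYPE('b::euclidean_space) X f (h ` F) = fp_index TYPE('b) X f F"
proof -
  obtain k where hk: "homeomorphic_maps X X h k" using h homeomorphic_map_maps by blast
  then have kh: "homeomorphic_maps X X k h" using homeomorphic_maps_sym by blast
  have "is_fp_index TYPE('b) X f (h ` F) i \<longleftrightarrow> is_fp_index TYPE('b) X f F i" for i
  proof
    assume "is_fp_index TYPE('b) X f (h ` F) i"
    with kh f homeomorphic_maps_commute_inverse[OF hk f comm]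
    have "is_fp_index TYPE('b) X f (k ` h ` F) i" by (rule is_fp_index_homeomorphic_image)
    then show "is_fp_index TYPE('b) X f F i"
      by (simp add: homeomorphic_maps_image_inverse[OF hk F])
  qed (rule is_fp_index_homeomorphic_image[OF hk f comm])
  \<comment> \<open>No uniqueness of the index is needed: both sides are THE of the same predicate.\<close>
  then have "is_fp_index TYPE('b) X f (h ` F) = is_fp_index TYPE('b) X f F" by (intro ext)
  then show ?thesis by (simp add: fp_index_def)
qed

theorem proposition4p13:
  fixes G :: "('g, 'm) monoid_scheme" and \<phi> :: "'g \<Rightarrow> 'a \<Rightarrow> 'a"
    and X :: "'a topology" and f :: "'a \<Rightarrow> 'a"
  assumes manifold: "is_manifold TYPE('b::euclidean_space) X"
    and action: "group_action G (topspace X) \<phi>"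
    and homeo: "\<And>g. g \<in> carrier G \<Longrightarrow> homeomorphic_map X X (\<phi> g)"
    and cont: "continuous_map X X f"
    and equivariant: "\<And>g y. g \<in> carrier G \<Longrightarrow> y \<in> topspace X \<Longrightarrow> f (\<phi> g y) = \<phi> g (f y)"
    and compact_classes: "\<And>y. y \<in> topspace X \<Longrightarrow> f y = y \<Longrightarrow> compactin X (fp_class X f y)"
    and x: "x \<in> topspace X" "f x = x"
    and g: "g \<in> carrier G"
  shows "fp_index TYPE('b) X f (fp_class X f x) = fp_index TYPE('b) X f (fp_class X f (\<phi> g x))"
proof -
  have h: "homeomorphic_map X X (\<phi> g)" using g by (rule homeo)
  have f: "f ` topspace X \<subseteq> topspace X" using cont by (rule continuous_map_image_subset_topspace)
  have comm: "\<And>y. y \<in> topspace X \<Longrightarrow> f (\<phi> g y) = \<phi> g (f y)" using g by (rule equivariant)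
  have "fp_index TYPE('b) X f (fp_class X f (\<phi> g x)) = fp_index TYPE('b) X f (\<phi> g ` fp_class X f x)"
    using fp_class_homeomorphic_image[OF h f comm x(1)] by simp
  also have "\<dots> = fp_index TYPE('b) X f (fp_class X f x)"
    using h f comm fp_class_subset_topspace by (rule fp_index_homeomorphic_image)
  finally show ?thesis by (rule sym)
qed

end
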